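(* Consider the P-SSD algorithm described in the context, executed over an arbitrary, possibly time-varying, sequence of digraphs $\{G_k\}_{k\ge1}$. Then at each iteration $k\in\mathbb{N}$, $\mathcal{R}(C_k^i)\subseteq\mathcal{R}(C_{k-1}^j)$ for all $i\in\{1,\dots,M\}$ and all $j\in\{i\}\cup\mathcal{N}_{\mathrm{in}}^k(i)$.
   Context: Data setting: a map $T:\mathcal{M}\to\mathcal{M}$, $\mathcal{M}\subseteq\mathbb{R}^n$; a dictionary $D(x)=[d_1(x),\dots,d_{N_d}(x)]$ of real-valued functions on $\mathcal{M}$; data matrices $X,Y\in\mathbb{R}^{N\times n}$ whose $i$-th rows $x_i^T,y_i^T$ satisfy $y_i=T(x_i)$; $D(X)\in\mathbb{R}^{N\times N_d}$ is the matrix with rows $D(x_1),\dots,D(x_N)$ (similarly $D(Y)$). Assumption: $D(X)$ and $D(Y)$ have full column rank. There are $M$ agents; agent $i$ holds local dictionary snapshots $D(X_i),D(Y_i)$ (obtained from a subset of the snapshot pairs) such that the union over $i$ of the rows of $[D(X_i),D(Y_i)]$ equals the set of rows of $[D(X),D(Y)]$. There are signature matrices $D(X_s),D(Y_s)$ with full column rank such that the rows of $[D(X_s),D(Y_s)]$ are contained in the rows of $[D(X_i),D(Y_i)]$ for every $i$. SSD algorithm: given $A,B\in\mathbb{R}^{m\times q}$, set $A_1=A$, $B_1=B$, $C=I_q$, and iterate: let $[Z^A_j;Z^B_j]$ be a matrix whose columns form a basis of the null space of $[A_j,B_j]$ (with $Z^A_j$ having as many rows as $A_j$ has columns); if the null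 space is trivial return $0$; if the number of rows of $Z^A_j$ is at most its number of columns, return $C$; otherwise set $C\leftarrow CZ^A_j$, $A_{j+1}=A_jZ^A_j$, $B_{j+1}=B_jZ^A_j$. Its output is denoted $\mathrm{SSD}(A,B)$. P-SSD algorithm: at iteration $k\ge1$ the digraph $G_k$ is used; an edge $(j,i)\in E_k$ means $j$ is an in-neighbor of $i$, and $\mathcal{N}_{\mathrm{in}}^k(i)$ denotes the in-neighbors of $i$ in $G_k$. Each agent $i$ sets $C_0^i=I_{N_d}$, $\mathrm{flag}_0^i=0$, and for $k=1,2,\dots$: receives $C_{k-1}^j$ for $j\in\mathcal{N}_{\mathrm{in}}^k(i)$; sets $D_k^i=\mathrm{basis}\big(\bigcap_{j\in\{i\}\cup\mathcal{N}_{\mathrm{in}}^k(i)}\mathcal{R}(C_{k-1}^j)\big)$; sets $E_k^i=\mathrm{SSD}(D(X_i)D_k^i,D(Y_i)D_k^i)$; if the number of columns of $D_k^iE_k^i$ is strictly less than that of $C_{k-1}^i$, sets $C_k^i=D_k^iE_k^i$ and $\mathrm{flag}_k^i=0$; otherwise sets $C_k^i=C_{k-1}^i$ and $\mathrm{flag}_k^i=1$; then transmits $C_k^i$ to its out-neighbors. Here $\mathrm{basis}(\mathcal{A})$ returns a matrix whose columns form a basis of the subspace $\mathcal{A}$, and returns $0$ if $\mathcal{A}=\{0\}$; the matrix $0$ is regarded as having $0$ columns. $\mathcal{R}(\cdot)$ denotes range space. *)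

theory Defs
  imports "Jordan_Normal_Form.Matrix"
begin

text \<open>Matrices of arbitrary (varying) size are Jordan_Normal_Form matrices of type real mat.
  The "zero matrix with 0 columns" of the paper is a matrix with dim_col = 0.\<close>

definition col_range :: "real mat \<Rightarrow> real vec set" where
  "col_range A = {A *\<^sub>v x | x. x \<in> carrier_vec (dim_col A)}"

definition full_col_rank :: "real mat \<Rightarrow> bool" where
  "full_col_rank A \<longleftrightarrow> inj_on (\<lambda>x. A *\<^sub>v x) (carrier_vec (dim_col A))"

text \<open>Z is a (possible output of) basis(S) for a subspace S of R^n: Z has n rows and its
  columns form a basis of S.  For S = {0} this forces Z to have 0 columns.\<close>
definition is_basis_mat :: "nat \<Rightarrow> real vec set \<Rightarrow> real mat \<Rightarrow> bool" where
  "is_basis_mat n S Z \<longleftrightarrow> dim_row Z = n \<and> col_range Z = S \<and> full_col_rank Z"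

text \<open>Null space of the block matrix [A, B], its vectors split as pairs (upper part, lower part).\<close>
definition null_pair :: "real mat \<Rightarrow> real mat \<Rightarrow> (real vec \<times> real vec) set" where
  "null_pair A B = {(u, v). u \<in> carrier_vec (dim_col A) \<and> v \<in> carrier_vec (dim_col B) \<and>
      A *\<^sub>v u + B *\<^sub>v v = 0\<^sub>v (dim_row A)}"

definition null_basis :: "real mat \<Rightarrow> real mat \<Rightarrow> real mat \<Rightarrow> real mat \<Rightarrow> bool" where
  "null_basis A B ZA ZB \<longleftrightarrow>
     dim_row ZA = dim_col A \<and> dim_row ZB = dim_col B \<and> dim_col ZA = dim_col ZB \<and>
     (\<lambda>x. (ZA *\<^sub>v x, ZB *\<^sub>v x)) ` carrier_vec (dim_col ZA) = null_pair A B \<and>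
     inj_on (\<lambda>x. (ZA *\<^sub>v x, ZB *\<^sub>v x)) (carrier_vec (dim_col ZA))"

text \<open>SSD loop: ssd_loop A B C R means that running the loop from the state (A_j, B_j, C)
  can return R, for some admissible choice of null-space bases.\<close>
inductive ssd_loop :: "real mat \<Rightarrow> real mat \<Rightarrow> real mat \<Rightarrow> real mat \<Rightarrow> bool" where
  trivial: "null_pair A B = {(0\<^sub>v (dim_col A), 0\<^sub>v (dim_col B))} \<Longrightarrow>
      ssd_loop A B C (0\<^sub>m (dim_row C) 0)"
| stop: "null_pair A B \<noteq> {(0\<^sub>v (dim_col A), 0\<^sub>v (dim_col B))} \<Longrightarrow> null_basis A B ZA ZB \<Longrightarrow>
      dim_row ZA \<le> dim_col ZA \<Longrightarrow> ssd_loop A B C C"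
| step: "null_pair A B \<noteq> {(0\<^sub>v (dim_col A), 0\<^sub>v (dim_col B))} \<Longrightarrow> null_basis A B ZA ZB \<Longrightarrow>
      \<not> dim_row ZA \<le> dim_col ZA \<Longrightarrow> ssd_loop (A * ZA) (B * ZA) (C * ZA) R \<Longrightarrow>
      ssd_loop A B C R"

definition SSD_out :: "real mat \<Rightarrow> real mat \<Rightarrow> real mat \<Rightarrow> bool" where
  "SSD_out A B E \<longleftrightarrow> ssd_loop A B (1\<^sub>m (dim_col A)) E"

definition rows_pair :: "real mat \<Rightarrow> real mat \<Rightarrow> (real vec \<times> real vec) set" where
  "rows_pair A B = {(row A r, row B r) | r. r < dim_row A}"

text \<open>Agents are 1..M; Nin k i is the set of in-neighbours of agent i in
  the digraph G_k; C k i is the matrix C_k^i.  At each iteration k \<ge> 1, each agent chooses some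
  basis D_k^i and some SSD output E_k^i (all admissible choices are allowed).  The flags do not
  influence the matrices C and are omitted.\<close>
definition pssd_exec :: "nat \<Rightarrow> nat \<Rightarrow> (nat \<Rightarrow> real mat) \<Rightarrow> (nat \<Rightarrow> real mat) \<Rightarrow>
    (nat \<Rightarrow> nat \<Rightarrow> nat set) \<Rightarrow> (nat \<Rightarrow> nat \<Rightarrow> real mat) \<Rightarrow> bool" where
  "pssd_exec M Nd DXl DYl Nin C \<longleftrightarrow>
     (\<forall>i\<in>{1..M}. C 0 i = 1\<^sub>m Nd) \<and>
     (\<forall>k\<ge>1. \<forall>i\<in>{1..M}. \<exists>Dk Ek.
        is_basis_mat Nd (\<Inter>j\<in>insert i (Nin k i). col_range (C (k - 1) j)) Dk \<and>
        SSD_out (DXl i * Dk) (DYl i * Dk) Ek \<and>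
        C k i = (if dim_col (Dk * Ek) < dim_col (C (k - 1) i) then Dk * Ek else C (k - 1) i))"

end

(* The new C_k^i is either D_k^i E_k^i, whose range lies in R(D_k^i), the intersection of the
   ranges R(C_{k-1}^j), or the old C_{k-1}^i, which is kept only when D_k^i E_k^i has at least as
   many columns.  D_k^i E_k^i has full column rank: D(Y_i) contains the rows of D(Y_s), so it has
   full column rank, and then every SSD step multiplies by the injective upper block of a
   null-space basis.  A full-rank matrix whose range lies in R(C_{k-1}^i) and which has at least as
   many columns as C_{k-1}^i has the same range, so in both cases R(C_k^i) is contained in the
   intersection. *)

theory Submission
  imports Defs "Jordan_Normal_Form.Determinant"
begin

lemma assoc_mult_mat_vec_dim:
  assumes "dim_row B = dim_col A" "x \<in> carrier_vec (dim_col B)"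
  shows "(A * B) *\<^sub>v x = A *\<^sub>v (B *\<^sub>v x)"
  by (rule assoc_mult_mat_vec[of _ "dim_row A" "dim_col A" _ "dim_col B"]) (use assms in auto)

lemma col_range_mult_subset:
  assumes "dim_row B = dim_col A"
  shows "col_range (A * B) \<subseteq> col_range A"
proof
  fix w assume "w \<in> col_range (A * B)"
  then obtain x where x: "x \<in> carrier_vec (dim_col B)" and w: "w = (A * B) *\<^sub>v x"
    unfolding col_range_def by auto
  have "w = A *\<^sub>v (B *\<^sub>v x)" using w x assms by (simp add: assoc_mult_mat_vec_dim)
  moreover have "B *\<^sub>v x \<in> carrier_vec (dim_col A)" by (rule carrier_vecI) (simp add: assms)
  ultimately show "w \<in> col_range A" unfolding col_range_def by blast
qed

lemma full_col_rank_kernel_zero: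
  assumes "full_col_rank A" "x \<in> carrier_vec (dim_col A)" "A *\<^sub>v x = 0\<^sub>v (dim_row A)"
  shows "x = 0\<^sub>v (dim_col A)"
proof -
  have "A *\<^sub>v x = A *\<^sub>v 0\<^sub>v (dim_col A)" using assms(3) by auto
  then show ?thesis
    by (rule inj_onD[OF assms(1)[unfolded full_col_rank_def]]) (use assms(2) in auto)
qed

lemma full_col_rank_mult:
  assumes A: "full_col_rank A" and B: "full_col_rank B" and dims: "dim_row B = dim_col A"
  shows "full_col_rank (A * B)"
  unfolding full_col_rank_def
proof (rule inj_onI)
  fix x y assume x: "x \<in> carrier_vec (dim_col (A * B))" and y: "y \<in> carrier_vec (dim_col (A * B))"
    and eq: "(A * B) *\<^sub>v x = (A * B) *\<^sub>v y"
  have "A *\<^sub>v (B *\<^sub>v x) = A *\<^sub>v (B *\<^sub>v y)"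
    using eq x y dims by (simp add: assoc_mult_mat_vec_dim)
  then have "B *\<^sub>v x = B *\<^sub>v y"
    by (rule inj_onD[OF A[unfolded full_col_rank_def]]) (simp_all add: carrier_vecI dims)
  then show "x = y"
    by (rule inj_onD[OF B[unfolded full_col_rank_def]]) (use x y in auto)
qed

lemma full_col_rank_mult_right:
  assumes AB: "full_col_rank (A * B)" and dims: "dim_row B = dim_col A"
  shows "full_col_rank B"
  unfolding full_col_rank_def
proof (rule inj_onI)
  fix x y assume x: "x \<in> carrier_vec (dim_col B)" and y: "y \<in> carrier_vec (dim_col B)"
    and eq: "B *\<^sub>v x = B *\<^sub>v y"
  have "(A * B) *\<^sub>v x = (A * B) *\<^sub>v y"
    using eq x y dims by (simp add: assoc_mult_mat_vec_dim)
  then show "x = y"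
    by (rule inj_onD[OF AB[unfolded full_col_rank_def]]) (use x y in auto)
qed

lemma full_col_rank_if_rows_subset:
  assumes rows: "row A ` {..<dim_row A} \<subseteq> row B ` {..<dim_row B}"
    and cols: "dim_col A = dim_col B" and rank: "full_col_rank A"
  shows "full_col_rank B"
  unfolding full_col_rank_def
proof (rule inj_onI)
  fix x y assume x: "x \<in> carrier_vec (dim_col B)" and y: "y \<in> carrier_vec (dim_col B)"
    and eq: "B *\<^sub>v x = B *\<^sub>v y"
  have "A *\<^sub>v x = A *\<^sub>v y"
  proof (rule eq_vecI)
    fix r assume "r < dim_vec (A *\<^sub>v y)"
    then obtain r' where r': "r' < dim_row B" "row A r = row B r'" and r: "r < dim_row A"
      using rows by auto
    have "(B *\<^sub>v x) $ r' = (B *\<^sub>v y) $ r'" using eq by simp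
    then show "(A *\<^sub>v x) $ r = (A *\<^sub>v y) $ r" using r r' by simp
  qed simp
  then show "x = y"
    by (rule inj_onD[OF rank[unfolded full_col_rank_def]]) (use x y cols in simp_all)
qed

lemma snd_rows_pair:
  assumes "dim_row A = dim_row B"
  shows "snd ` rows_pair A B = row B ` {..<dim_row B}"
  using assms unfolding rows_pair_def by force

lemma full_col_rank_if_rows_pair_subset:
  assumes sub: "rows_pair A B \<subseteq> rows_pair A' B'"
    and rows: "dim_row A = dim_row B" "dim_row A' = dim_row B'"
    and cols: "dim_col B = dim_col B'" and rank: "full_col_rank B"
  shows "full_col_rank B'"
proof -
  have "snd ` rows_pair A B \<subseteq> snd ` rows_pair A' B'" using sub by (rule image_mono)
  then have "row B ` {..<dim_row B} \<subseteq> row B' ` {..<dim_row B'}"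
    by (simp only: snd_rows_pair rows)
  then show ?thesis using cols rank by (rule full_col_rank_if_rows_subset)
qed

lemma col_range_subset_imp_factor:
  assumes sub: "col_range D \<subseteq> col_range C"
  obtains Y where "Y \<in> carrier_mat (dim_col C) (dim_col D)" "D = C * Y"
proof -
  have "\<exists>y. y \<in> carrier_vec (dim_col C) \<and> C *\<^sub>v y = D *\<^sub>v unit_vec (dim_col D) l" for l
  proof -
    have "D *\<^sub>v unit_vec (dim_col D) l \<in> col_range D" unfolding col_range_def by auto
    then have "D *\<^sub>v unit_vec (dim_col D) l \<in> col_range C" using sub by blast
    then show ?thesis unfolding col_range_def by force
  qed
  then obtain y where y: "\<And>l. y l \<in> carrier_vec (dim_col C)"
    "\<And>l. C *\<^sub>v y l = D *\<^sub>v unit_vec (dim_col D) l"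
    by (metis (full_types))
  have "D *\<^sub>v 0\<^sub>v (dim_col D) \<in> col_range D" unfolding col_range_def by auto
  then have "D *\<^sub>v 0\<^sub>v (dim_col D) \<in> col_range C" using sub by blast
  then have rows: "dim_row D = dim_row C"
    unfolding col_range_def by (auto dest: arg_cong[of _ _ dim_vec])
  define Y where "Y = mat (dim_col C) (dim_col D) (\<lambda>(i, l). y l $ i)"
  have "D = C * Y"
  proof (rule eq_matI)
    fix i l assume i: "i < dim_row (C * Y)" and l: "l < dim_col (C * Y)"
    have "col Y l = y l"
      by (rule eq_vecI) (use y(1)[of l] l in \<open>auto simp: Y_def\<close>)
    then have "(C * Y) $$ (i, l) = (C *\<^sub>v y l) $ i" using i l by (simp add: Y_def)
    also have "\<dots> = D $$ (i, l)" using y(2) i l rows by (simp add: Y_def)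
    finally show "D $$ (i, l) = (C * Y) $$ (i, l)" by simp
  qed (simp_all add: Y_def rows)
  moreover have "Y \<in> carrier_mat (dim_col C) (dim_col D)" by (simp add: Y_def)
  ultimately show thesis using that by blast
qed

lemma full_col_rank_imp_dim_col_le:
  assumes Y: "Y \<in> carrier_mat m n" and rank: "full_col_rank Y"
  shows "n \<le> m"
proof (rule ccontr)
  \<comment> \<open>Padding Y with zero rows gives a singular square matrix, whose kernel lies in that of Y.\<close>
  assume "\<not> n \<le> m"
  then have mn: "m < n" by simp
  define Y' where "Y' = mat n n (\<lambda>(i, j). if i < m then Y $$ (i, j) else 0)"
  have Y'_carrier: "Y' \<in> carrier_mat n n" unfolding Y'_def by auto
  have "Y' = mat\<^sub>r n n (\<lambda>i. if i = n - 1 then 0\<^sub>v n else row Y' i)"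
    by (rule eq_matI) (use mn in \<open>auto simp: Y'_def\<close>)
  also have "det \<dots> = 0" by (rule det_row_0) (use mn in \<open>auto simp: Y'_def\<close>)
  finally obtain v where v: "v \<in> carrier_vec n" "v \<noteq> 0\<^sub>v n" "Y' *\<^sub>v v = 0\<^sub>v n"
    using det_0_iff_vec_prod_zero[OF Y'_carrier] by auto
  have "Y *\<^sub>v v = 0\<^sub>v m"
  proof (rule eq_vecI)
    fix i assume "i < dim_vec (0\<^sub>v m :: real vec)"
    then have i: "i < m" by simp
    have "(Y *\<^sub>v v) $ i = (Y' *\<^sub>v v) $ i"
      using i mn Y v(1) by (auto simp: Y'_def scalar_prod_def row_def)
    then show "(Y *\<^sub>v v) $ i = 0\<^sub>v m $ i" using v(3) i mn by simp
  qed (use Y in simp)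
  moreover have "dim_row Y = m" "dim_col Y = n" using Y by auto
  ultimately have "v = 0\<^sub>v n" using full_col_rank_kernel_zero[OF rank, of v] v(1) by simp
  with v(2) show False by simp
qed

lemma full_col_rank_square_imp_right_inverse:
  assumes Y: "Y \<in> carrier_mat n n" and rank: "full_col_rank Y"
  obtains Y' where "Y' \<in> carrier_mat n n" "Y * Y' = 1\<^sub>m n"
proof -
  have "det Y \<noteq> 0"
  proof
    assume "det Y = 0"
    then obtain v where v: "v \<in> carrier_vec n" "v \<noteq> 0\<^sub>v n" "Y *\<^sub>v v = 0\<^sub>v n"
      using det_0_iff_vec_prod_zero[OF Y] by auto
    then show False using full_col_rank_kernel_zero[OF rank, of v] Y by auto
  qed
  then have "Y \<in> Units (ring_mat TYPE(real) n undefined)" by (rule det_non_zero_imp_unit[OF Y])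
  then have "\<exists>Y' \<in> carrier_mat n n. Y * Y' = 1\<^sub>m n" unfolding Units_def ring_mat_def by auto
  then show thesis using that by blast
qed

lemma col_range_eq_if_subset_full_col_rank:
  assumes sub: "col_range D \<subseteq> col_range C" and rank: "full_col_rank D"
    and cols: "dim_col C \<le> dim_col D"
  shows "col_range C = col_range D"
proof -
  obtain Y where Y: "Y \<in> carrier_mat (dim_col C) (dim_col D)" and D: "D = C * Y"
    using col_range_subset_imp_factor[OF sub] .
  have "full_col_rank Y"
    using rank unfolding D by (rule full_col_rank_mult_right) (use Y in simp)
  then have square: "dim_col C = dim_col D"
    using full_col_rank_imp_dim_col_le[OF Y] cols by simp
  with Y have Y_square: "Y \<in> carrier_mat (dim_col D) (dim_col D)" by simp
  obtain Y' where Y': "Y' \<in> carrier_mat (dim_col D) (dim_col D)" "Y * Y' = 1\<^sub>m (dim_col D)"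
    by (rule full_col_rank_square_imp_right_inverse[OF Y_square \<open>full_col_rank Y\<close>])
  have "C = C * (Y * Y')" using Y'(2) square by simp
  also have "\<dots> = D * Y'"
    unfolding D by (rule assoc_mult_mat[symmetric]) (use Y_square Y' square in auto)
  finally have "col_range C = col_range (D * Y')" by simp
  also have "\<dots> \<subseteq> col_range D" using col_range_mult_subset Y' by simp
  finally show ?thesis using sub by blast
qed

lemma null_basis_full_col_rank:
  assumes basis: "null_basis A B ZA ZB" and rows: "dim_row A = dim_row B"
    and rank: "full_col_rank B"
  shows "full_col_rank ZA"
  unfolding full_col_rank_def
proof (rule inj_onI)
  fix x y assume x: "x \<in> carrier_vec (dim_col ZA)" and y: "y \<in> carrier_vec (dim_col ZA)"
    and eq: "ZA *\<^sub>v x = ZA *\<^sub>v y"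
  have "(ZA *\<^sub>v x, ZB *\<^sub>v x) \<in> null_pair A B" "(ZA *\<^sub>v y, ZB *\<^sub>v y) \<in> null_pair A B"
    using basis x y unfolding null_basis_def by blast+
  then have null: "A *\<^sub>v (ZA *\<^sub>v x) + B *\<^sub>v (ZB *\<^sub>v x) = 0\<^sub>v (dim_row A)"
      "A *\<^sub>v (ZA *\<^sub>v y) + B *\<^sub>v (ZB *\<^sub>v y) = 0\<^sub>v (dim_row A)"
    and carrier: "ZB *\<^sub>v x \<in> carrier_vec (dim_col B)" "ZB *\<^sub>v y \<in> carrier_vec (dim_col B)"
    unfolding null_pair_def by auto
  have "B *\<^sub>v (ZB *\<^sub>v x) = B *\<^sub>v (ZB *\<^sub>v y)"
  proof (rule eq_vecI)
    fix i assume "i < dim_vec (B *\<^sub>v (ZB *\<^sub>v y))"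
    then have i: "i < dim_row A" using rows by simp
    have "(A *\<^sub>v (ZA *\<^sub>v x)) $ i + (B *\<^sub>v (ZB *\<^sub>v x)) $ i = 0"
      "(A *\<^sub>v (ZA *\<^sub>v y)) $ i + (B *\<^sub>v (ZB *\<^sub>v y)) $ i = 0"
      using arg_cong[OF null(1), of "\<lambda>v. v $ i"] arg_cong[OF null(2), of "\<lambda>v. v $ i"] i rows
      by simp_all
    then show "(B *\<^sub>v (ZB *\<^sub>v x)) $ i = (B *\<^sub>v (ZB *\<^sub>v y)) $ i" using eq by simp
  qed simp
  then have "ZB *\<^sub>v x = ZB *\<^sub>v y"
    by (rule inj_onD[OF rank[unfolded full_col_rank_def]]) (use carrier in simp_all)
  with eq have "(ZA *\<^sub>v x, ZB *\<^sub>v x) = (ZA *\<^sub>v y, ZB *\<^sub>v y)" by simp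
  then show "x = y"
    using basis x y unfolding null_basis_def inj_on_def by blast
qed

lemma ssd_loop_full_col_rank:
  assumes "ssd_loop A B C R"
    and "dim_row A = dim_row B" "dim_col A = dim_col B" "dim_col C = dim_col A"
    and "full_col_rank B" "full_col_rank C"
  shows "dim_row R = dim_row C \<and> full_col_rank R"
  using assms
proof (induction rule: ssd_loop.induct)
  case (trivial A B C)
  then show ?case unfolding full_col_rank_def by (auto simp: inj_on_def)
next
  case (stop A B ZA ZB C)
  then show ?case by simp
next
  case (step A B ZA ZB C R)
  have ZA: "full_col_rank ZA" "dim_row ZA = dim_col A"
    using null_basis_full_col_rank step.hyps(2) step.prems(1,4) by (auto simp: null_basis_def)
  have "full_col_rank (B * ZA)" "full_col_rank (C * ZA)"
    using full_col_rank_mult ZA step.prems by simp_all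
  then have "dim_row R = dim_row (C * ZA) \<and> full_col_rank R"
    using step.IH step.prems ZA by simp
  then show ?case by simp
qed

lemma SSD_out_full_col_rank:
  assumes "SSD_out A B E"
    and "dim_row A = dim_row B" "dim_col A = dim_col B" "full_col_rank B"
  shows "dim_row E = dim_col A \<and> full_col_rank E"
proof -
  have "full_col_rank (1\<^sub>m (dim_col A))" unfolding full_col_rank_def by (auto simp: inj_on_def)
  then show ?thesis
    using ssd_loop_full_col_rank assms unfolding SSD_out_def by fastforce
qed

lemma col_range_pssd_update_subset:
  assumes D: "col_range D = S" "full_col_rank D"
    and E: "full_col_rank E" "dim_row E = dim_col D"
    and S: "S \<subseteq> col_range C"
  shows "col_range (if dim_col (D * E) < dim_col C then D * E else C) \<subseteq> S"
proof -
  have DE: "col_range (D * E) \<subseteq> S" "full_col_rank (D * E)"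
    using col_range_mult_subset[OF E(2)] full_col_rank_mult[OF D(2) E] D(1) by auto
  show ?thesis
  proof (cases "dim_col (D * E) < dim_col C")
    case False
    then have "col_range C = col_range (D * E)"
      by (intro col_range_eq_if_subset_full_col_rank) (use DE S in auto)
    with DE(1) False show ?thesis by simp
  qed (use DE in simp)
qed

theorem lemma4p7:
  fixes M Nd :: nat
    and DX DY :: "real mat"
    and DXl DYl :: "nat \<Rightarrow> real mat"
    and DXs DYs :: "real mat"
    and Nin :: "nat \<Rightarrow> nat \<Rightarrow> nat set"
    and C :: "nat \<Rightarrow> nat \<Rightarrow> real mat"
  assumes dims: "dim_col DX = Nd" "dim_col DY = Nd" "dim_row DX = dim_row DY"
    and rank: "full_col_rank DX" "full_col_rank DY"
    and local_dims: "\<forall>i\<in>{1..M}. dim_col (DXl i) = Nd \<and> dim_col (DYl i) = Nd \<and>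
                          dim_row (DXl i) = dim_row (DYl i)"
    and cover: "(\<Union>i\<in>{1..M}. rows_pair (DXl i) (DYl i)) = rows_pair DX DY"
    and sig_dims: "dim_col DXs = Nd" "dim_col DYs = Nd" "dim_row DXs = dim_row DYs"
    and sig_rank: "full_col_rank DXs" "full_col_rank DYs"
    and sig: "\<forall>i\<in>{1..M}. rows_pair DXs DYs \<subseteq> rows_pair (DXl i) (DYl i)"
    and graphs: "\<forall>k i. Nin k i \<subseteq> {1..M}"
    and exec: "pssd_exec M Nd DXl DYl Nin C"
  shows "\<forall>k\<ge>1. \<forall>i\<in>{1..M}. \<forall>j\<in>insert i (Nin k i).
           col_range (C k i) \<subseteq> col_range (C (k - 1) j)"
proof (intro allI impI ballI)
  fix k i j assume k: "k \<ge> 1" and i: "i \<in> {1..M}" and j: "j \<in> insert i (Nin k i)"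
  let ?S = "\<Inter>j\<in>insert i (Nin k i). col_range (C (k - 1) j)"
  obtain Dk Ek where Dk: "is_basis_mat Nd ?S Dk" and Ek: "SSD_out (DXl i * Dk) (DYl i * Dk) Ek"
    and Ck: "C k i = (if dim_col (Dk * Ek) < dim_col (C (k - 1) i) then Dk * Ek else C (k - 1) i)"
    using exec[unfolded pssd_exec_def, THEN conjunct2, rule_format, OF k i] by blast
  have Dk_basis: "dim_row Dk = Nd" "col_range Dk = ?S" "full_col_rank Dk"
    using Dk unfolding is_basis_mat_def by auto
  have local: "dim_col (DXl i) = Nd" "dim_col (DYl i) = Nd" "dim_row (DXl i) = dim_row (DYl i)"
    using local_dims i by auto
  have "full_col_rank (DYl i)"
    using full_col_rank_if_rows_pair_subset[OF sig[rule_format, OF i] sig_dims(3) local(3)]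
      sig_dims(2) local(2) sig_rank(2) by simp
  then have "full_col_rank (DYl i * Dk)"
    by (rule full_col_rank_mult) (simp_all add: Dk_basis local(2))
  then have Ek_rank: "dim_row Ek = dim_col Dk" "full_col_rank Ek"
    using SSD_out_full_col_rank[OF Ek] local by simp_all
  have "col_range (C k i) \<subseteq> ?S"
    unfolding Ck by (rule col_range_pssd_update_subset) (use Dk_basis Ek_rank j in auto)
  then show "col_range (C k i) \<subseteq> col_range (C (k - 1) j)" using j by blast
qed

end
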